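(* Let $q$ be a nonzero complex number with $q^4\ne 1$ and let $\zeta,\zeta',\zeta''$ be nonzero complex numbers different from $\pm1$. Put $V=V(\zeta)$, $U=V(\zeta')$, $W=V(\zeta'')$. Then, as maps $V\otimes U\otimes W\to W\otimes U\otimes V$, \[(R_{\zeta',\zeta''}\otimes I_{V})(I_{U}\otimes R_{\zeta,\zeta''})(R_{\zeta,\zeta'}\otimes I_{W})=(I_{W}\otimes R_{\zeta,\zeta'})(R_{\zeta,\zeta''}\otimes I_{U})(I_{V}\otimes R_{\zeta',\zeta''}),\] and the same identity holds with $R'$ in place of $R$ throughout.
   Context: $V(\zeta)$ denotes the two-dimensional super vector space with basis $x$ (even), $y$ (odd) (it is the Kac module of $U_q(\mathfrak{sl}(1|1))$ with $W$-eigenvalue $\zeta$); write $x',y'$ and $x'',y''$ for the corresponding bases of $V(\zeta')$, $V(\zeta'')$. For nonzero $\sigma,\tau$, $R_{\sigma,\tau}:V(\sigma)\otimes V(\tau)\to V(\tau)\otimes V(\sigma)$ and $R'_{\sigma,\tau}$ are the even linear maps (with $x,y$ basis of $V(\sigma)$, $\tilde x,\tilde y$ basis of $V(\tau)$) \[R_{\sigma,\tau}:\ x\otimes\tilde x\mapsto \tilde x\otimes x,\ x\otimes\tilde y\mapsto \sigma\,\tilde y\otimes x,\ y\otimes\tilde x\mapsto \tau\,\tilde x\otimes y+(1-\sigma^2)\,\tilde y\otimes x,\ y\otimes\tilde y\mapsto-\sigma\tau\,\tilde y\otimes y,\] \[R'_{\sigma,\tau}:\ x\otimes\tilde x\mapsto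 -\sigma\tau\,\tilde x\otimes x,\ x\otimes\tilde y\mapsto (1-\tau^2)\,\tilde x\otimes y-\tau\,\tilde y\otimes x,\ y\otimes\tilde x\mapsto-\sigma\,\tilde x\otimes y,\ y\otimes\tilde y\mapsto\tilde y\otimes y.\] $I_X$ is the identity of $X$; tensor products of these even maps act factorwise on pure tensors of basis vectors. *)

theory Defs
  imports Complex_Main
begin

(* Basis of V(zeta): False = x (even), True = y (odd).
   An even linear map between tensor products is given by its matrix:
   M out inp = coefficient of basis vector out in the image of basis vector inp. *)

type_synonym idx2 = "bool \<times> bool"
type_synonym idx3 = "bool \<times> bool \<times> bool"

definition Rmat :: "complex \<Rightarrow> complex \<Rightarrow> idx2 \<Rightarrow> idx2 \<Rightarrow> complex" where
  "Rmat \<sigma> \<tau> out inp =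
    (if inp = (False, False) then (if out = (False, False) then 1 else 0)
     else if inp = (False, True) then (if out = (True, False) then \<sigma> else 0)
     else if inp = (True, False) then
       (if out = (False, True) then \<tau> else if out = (True, False) then 1 - \<sigma>\<^sup>2 else 0)
     else (if out = (True, True) then - \<sigma> * \<tau> else 0))"

definition Rmat' :: "complex \<Rightarrow> complex \<Rightarrow> idx2 \<Rightarrow> idx2 \<Rightarrow> complex" where
  "Rmat' \<sigma> \<tau> out inp =
    (if inp = (False, False) then (if out = (False, False) then - \<sigma> * \<tau> else 0)
     else if inp = (False, True) then
       (if out = (False, True) then 1 - \<tau>\<^sup>2 else if out = (True, False) then - \<tau> else 0)
     else if inp = (True, False) then (if out = (False, True) then - \<sigma> else 0)
     else (if out = (True, True) then 1 else 0))"

definition tensor_I :: "(idx2 \<Rightarrow> idx2 \<Rightarrow> complex) \<Rightarrow> idx3 \<Rightarrow> idx3 \<Rightarrow> complex" where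
  "tensor_I M out inp =
    M (fst out, fst (snd out)) (fst inp, fst (snd inp)) *
    (if snd (snd out) = snd (snd inp) then 1 else 0)"

definition I_tensor :: "(idx2 \<Rightarrow> idx2 \<Rightarrow> complex) \<Rightarrow> idx3 \<Rightarrow> idx3 \<Rightarrow> complex" where
  "I_tensor M out inp =
    (if fst out = fst inp then 1 else 0) * M (snd out) (snd inp)"

definition comp3 :: "(idx3 \<Rightarrow> idx3 \<Rightarrow> complex) \<Rightarrow> (idx3 \<Rightarrow> idx3 \<Rightarrow> complex) \<Rightarrow> idx3 \<Rightarrow> idx3 \<Rightarrow> complex" where
  "comp3 A B out inp = (\<Sum>m\<in>UNIV. A out m * B m inp)"

end

theory Submission
  imports Defs
begin

text \<open>Both identities are the coloured Yang--Baxter equation, which holds for all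
  parameters.\<close>

definition yang_baxter :: "(complex \<Rightarrow> complex \<Rightarrow> idx2 \<Rightarrow> idx2 \<Rightarrow> complex) \<Rightarrow> bool" where
  "yang_baxter R \<longleftrightarrow> (\<forall>a b c.
     comp3 (comp3 (tensor_I (R b c)) (I_tensor (R a c))) (tensor_I (R a b))
   = comp3 (comp3 (I_tensor (R a b)) (tensor_I (R a c))) (I_tensor (R b c)))"

lemma sum_UNIV_idx3:
  "(\<Sum>m\<in>UNIV. f m) =
     f (False, False, False) + f (False, False, True) + f (False, True, False) + f (False, True, True) +
     f (True, False, False) + f (True, False, True) + f (True, True, False) + f (True, True, True)"
  for f :: "idx3 \<Rightarrow> 'a::comm_monoid_add"
  by (simp add: UNIV_Times_UNIV[symmetric] sum.cartesian_product[symmetric] UNIV_bool add.assoc)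

lemma yang_baxter_Rmat: "yang_baxter Rmat"
  unfolding yang_baxter_def fun_eq_iff split_paired_All all_bool_eq comp3_def sum_UNIV_idx3
    tensor_I_def I_tensor_def Rmat_def
  by (simp add: algebra_simps power2_eq_square)

lemma yang_baxter_Rmat': "yang_baxter Rmat'"
  unfolding yang_baxter_def fun_eq_iff split_paired_All all_bool_eq comp3_def sum_UNIV_idx3
    tensor_I_def I_tensor_def Rmat'_def
  by (simp add: algebra_simps power2_eq_square)

theorem theorem6p1:
  fixes q \<zeta> \<zeta>' \<zeta>'' :: complex
  assumes "q \<noteq> 0" and "q ^ 4 \<noteq> 1"
    and "\<zeta> \<noteq> 0" and "\<zeta> \<noteq> 1" and "\<zeta> \<noteq> -1"
    and "\<zeta>' \<noteq> 0" and "\<zeta>' \<noteq> 1" and "\<zeta>' \<noteq> -1"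
    and "\<zeta>'' \<noteq> 0" and "\<zeta>'' \<noteq> 1" and "\<zeta>'' \<noteq> -1"
  shows "comp3 (comp3 (tensor_I (Rmat \<zeta>' \<zeta>'')) (I_tensor (Rmat \<zeta> \<zeta>''))) (tensor_I (Rmat \<zeta> \<zeta>'))
       = comp3 (comp3 (I_tensor (Rmat \<zeta> \<zeta>')) (tensor_I (Rmat \<zeta> \<zeta>''))) (I_tensor (Rmat \<zeta>' \<zeta>'')) \<and>
       comp3 (comp3 (tensor_I (Rmat' \<zeta>' \<zeta>'')) (I_tensor (Rmat' \<zeta> \<zeta>''))) (tensor_I (Rmat' \<zeta> \<zeta>'))
       = comp3 (comp3 (I_tensor (Rmat' \<zeta> \<zeta>')) (tensor_I (Rmat' \<zeta> \<zeta>''))) (I_tensor (Rmat' \<zeta>' \<zeta>''))"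
  using yang_baxter_Rmat yang_baxter_Rmat' unfolding yang_baxter_def by blast

end
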